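(* Under the standing assumptions below (for both $k=l$ and $k=r$), let $f(p):=f_l(p)+f_r(p)+u_r-u_l$ for $p>0$, and let $I_k:=\displaystyle\int_0^{p_k}\frac{dq}{\hat\rho_k(q)\,c_k(q,\hat\rho_k(q))}\in(0,+\infty]$. Then there exists a unique $p^*\in(0,\infty)$ with $f(p^* )=0$ if and only if $$u_r-u_l<I_l+I_r.$$
   Context: For each $k\in\{l,r\}$: $\varGamma_k,h_k:(0,\infty)\to\mathbb R$ are twice continuously differentiable and satisfy (C1) $\varGamma_k'\le 0$, $(\rho\varGamma_k(\rho))'\ge 0$, $(\rho\varGamma_k(\rho))''\ge0$; (C2) $\lim_{\rho\to+\infty}\varGamma_k(\rho)=\varGamma_{k,\infty}>0$ and $\varGamma_k(\rho)\le\varGamma_{k,\infty}+2$ for all $\rho>0$; (C3) $h_k'\ge0$, $h_k''\ge0$. Equation of state $p=\varGamma_k(\rho)\rho e+h_k(\rho)$, i.e. $e_k(p,\rho)=\frac{p-h_k(\rho)}{\varGamma_k(\rho)\rho}$; sound speed $c_k(p,\rho)=\sqrt{\left(\frac1\rho+\frac{\varGamma_k'(\rho)}{\varGamma_k(\rho)}\right)(p-h_k(\rho))+\frac p\rho\varGamma_k(\rho)+h_k'(\rho)}$. Initial states $(\rho_l,u_l,p_l)$ and $(\rho_r,u_r,p_r)$ with $\rho_k>0$, $p_k>0$, $u_k\in\mathbb R$, $e_k(p_k,\rho_k)\ge0$. Hugoniot function $\varPhi_k(p,\rho):=\varGamma_k(\rho_k)\rho_k(p-h_k(\rho))-\varGamma_k(\rho)\rho(p_k-h_k(\rho_k))-\tfrac12\varGamma_k(\rho_k)(p+p_k)\varGamma_k(\rho)(\rho-\rho_k)$;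 $\rho_{k,\max}$ is the unique $\rho>\rho_k$ with $(\rho-\rho_k)\varGamma_k(\rho)=2\rho_k$; for $p>p_k$, $\rho_k^H(p)$ is the unique $\rho\in(\rho_k,\rho_{k,\max})$ with $\varPhi_k(p,\rho)=0$. $\hat\rho_k$ is the solution of $\frac{d\hat\rho}{dq}=\frac{1}{c_k(q,\hat\rho)^2}$, $\hat\rho(p_k)=\rho_k$, assumed to exist on $(0,p_k]$ with $\hat\rho_k(q)>0$ and $e_k(q,\hat\rho_k(q))\ge 0$ there. Define $f_k(p)=\int_{p_k}^{p}\frac{dq}{\hat\rho_k(q)c_k(q,\hat\rho_k(q))}$ for $0<p\le p_k$ and $f_k(p)=\left((p-p_k)\left(\frac1{\rho_k}-\frac1{\rho_k^H(p)}\right)\right)^{1/2}$ for $p>p_k$. *)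

theory Defs
  imports "HOL-Analysis.Analysis"
begin

text \<open>Equation of state p = Gamma(rho) rho e + h(rho).  The functions Gamma and h are
  given together with their first and second derivatives (G1, G2 and H1, H2).\<close>

definition eint :: "(real \<Rightarrow> real) \<Rightarrow> (real \<Rightarrow> real) \<Rightarrow> real \<Rightarrow> real \<Rightarrow> real" where
  "eint G H p \<rho> = (p - H \<rho>) / (G \<rho> * \<rho>)"

definition sound :: "(real \<Rightarrow> real) \<Rightarrow> (real \<Rightarrow> real) \<Rightarrow> (real \<Rightarrow> real) \<Rightarrow> (real \<Rightarrow> real)
    \<Rightarrow> real \<Rightarrow> real \<Rightarrow> real" where
  "sound G G1 H H1 p \<rho> =
     sqrt ((1 / \<rho> + G1 \<rho> / G \<rho>) * (p - H \<rho>) + p / \<rho> * G \<rho> + H1 \<rho>)"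

definition eos_assms :: "(real \<Rightarrow> real) \<Rightarrow> (real \<Rightarrow> real) \<Rightarrow> (real \<Rightarrow> real) \<Rightarrow> real
    \<Rightarrow> (real \<Rightarrow> real) \<Rightarrow> (real \<Rightarrow> real) \<Rightarrow> (real \<Rightarrow> real) \<Rightarrow> bool" where
  "eos_assms G G1 G2 Ginf H H1 H2 \<longleftrightarrow>
     (\<forall>\<rho>>0. (G has_real_derivative G1 \<rho>) (at \<rho>)) \<and>
     (\<forall>\<rho>>0. (G1 has_real_derivative G2 \<rho>) (at \<rho>)) \<and>
     continuous_on {0<..} G2 \<and>
     (\<forall>\<rho>>0. (H has_real_derivative H1 \<rho>) (at \<rho>)) \<and>
     (\<forall>\<rho>>0. (H1 has_real_derivative H2 \<rho>) (at \<rho>)) \<and>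
     continuous_on {0<..} H2 \<and>
     (\<forall>\<rho>>0. G1 \<rho> \<le> 0 \<and> G \<rho> + \<rho> * G1 \<rho> \<ge> 0 \<and> 2 * G1 \<rho> + \<rho> * G2 \<rho> \<ge> 0) \<and>
     (G \<longlongrightarrow> Ginf) at_top \<and> Ginf > 0 \<and> (\<forall>\<rho>>0. G \<rho> \<le> Ginf + 2) \<and>
     (\<forall>\<rho>>0. H1 \<rho> \<ge> 0 \<and> H2 \<rho> \<ge> 0)"

definition Phi :: "(real \<Rightarrow> real) \<Rightarrow> (real \<Rightarrow> real) \<Rightarrow> real \<Rightarrow> real \<Rightarrow> real \<Rightarrow> real \<Rightarrow> real" where
  "Phi G H \<rho>k pk p \<rho> =
     G \<rho>k * \<rho>k * (p - H \<rho>) - G \<rho> * \<rho> * (pk - H \<rho>k)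
     - 1/2 * G \<rho>k * (p + pk) * G \<rho> * (\<rho> - \<rho>k)"

definition rho_max :: "(real \<Rightarrow> real) \<Rightarrow> real \<Rightarrow> real" where
  "rho_max G \<rho>k = (THE \<rho>. \<rho> > \<rho>k \<and> (\<rho> - \<rho>k) * G \<rho> = 2 * \<rho>k)"

definition rho_H :: "(real \<Rightarrow> real) \<Rightarrow> (real \<Rightarrow> real) \<Rightarrow> real \<Rightarrow> real \<Rightarrow> real \<Rightarrow> real" where
  "rho_H G H \<rho>k pk p = (THE \<rho>. \<rho>k < \<rho> \<and> \<rho> < rho_max G \<rho>k \<and> Phi G H \<rho>k pk p \<rho> = 0)"

text \<open>The wave curve f_k; rhat is the rarefaction density solving the ODE.
  For p <= p_k, the integral from p_k to p equals minus the integral over [p, p_k].\<close>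
definition fk :: "(real \<Rightarrow> real) \<Rightarrow> (real \<Rightarrow> real) \<Rightarrow> (real \<Rightarrow> real) \<Rightarrow> (real \<Rightarrow> real)
    \<Rightarrow> real \<Rightarrow> real \<Rightarrow> (real \<Rightarrow> real) \<Rightarrow> real \<Rightarrow> real" where
  "fk G G1 H H1 \<rho>k pk rhat p =
     (if p \<le> pk then - integral {p..pk} (\<lambda>q. 1 / (rhat q * sound G G1 H H1 q (rhat q)))
      else sqrt ((p - pk) * (1 / \<rho>k - 1 / rho_H G H \<rho>k pk p)))"

definition Ik :: "(real \<Rightarrow> real) \<Rightarrow> (real \<Rightarrow> real) \<Rightarrow> (real \<Rightarrow> real) \<Rightarrow> (real \<Rightarrow> real)
    \<Rightarrow> real \<Rightarrow> (real \<Rightarrow> real) \<Rightarrow> ereal" where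
  "Ik G G1 H H1 pk rhat =
     enn2ereal (\<integral>\<^sup>+ q \<in> {0<..<pk}. ennreal (1 / (rhat q * sound G G1 H H1 q (rhat q))) \<partial>lborel)"

definition side_assms :: "(real \<Rightarrow> real) \<Rightarrow> (real \<Rightarrow> real) \<Rightarrow> (real \<Rightarrow> real) \<Rightarrow> (real \<Rightarrow> real)
    \<Rightarrow> real \<Rightarrow> real \<Rightarrow> (real \<Rightarrow> real) \<Rightarrow> bool" where
  "side_assms G G1 H H1 \<rho>k pk rhat \<longleftrightarrow>
     \<rho>k > 0 \<and> pk > 0 \<and> eint G H pk \<rho>k \<ge> 0 \<and>
     rhat pk = \<rho>k \<and>
     (\<forall>q\<in>{0<..pk}. (rhat has_real_derivative 1 / (sound G G1 H H1 q (rhat q))\<^sup>2) (at q within {0<..pk})) \<and>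
     (\<forall>q\<in>{0<..pk}. rhat q > 0 \<and> eint G H q (rhat q) \<ge> 0)"

end

theory Submission
  imports Defs
begin

text \<open>Each wave curve f_k is continuous and strictly increasing on (0, \<infinity>). On the rarefaction
  branch p \<le> p_k it is minus the integral of the positive continuous function 1 / (rhat c) from p
  to p_k. On the shock branch, Phi is affine in p, so the Hugoniot locus is the graph of the
  pressure hug_numer / hug_denom, a quotient of an increasing function by one decreasing to 0 at
  rho_max; its inverse rho_H is therefore increasing and continuous, and f_k grows like the square root of p. Hence
  f = f_l + f_r + u_r - u_l is continuous, strictly increasing and tends to +\<infinity>, so it has a zero,
  necessarily unique, iff it is negative somewhere. By monotone convergence
  f(p) \<rightarrow> u_r - u_l - I_l - I_r as p \<rightarrow> 0+, which turns this into the stated criterion.\<close>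

lemma integral_pos_if_continuous_pos:
  fixes \<phi> :: "real \<Rightarrow> real"
  assumes "a < b" and cont: "continuous_on {a..b} \<phi>" and pos: "\<And>x. x \<in> {a..b} \<Longrightarrow> 0 < \<phi> x"
  shows "0 < integral {a..b} \<phi>"
proof -
  obtain x where x: "x \<in> {a..b}" and min: "\<And>y. y \<in> {a..b} \<Longrightarrow> \<phi> x \<le> \<phi> y"
    using continuous_attains_inf[OF compact_Icc _ cont] \<open>a < b\<close> by auto
  have "0 < (b - a) * \<phi> x" using \<open>a < b\<close> pos[OF x] by simp
  also have "\<dots> = integral {a..b} (\<lambda>_. \<phi> x)" using \<open>a < b\<close> by simp
  also have "\<dots> \<le> integral {a..b} \<phi>"
    using min by (intro integral_le integrable_continuous_interval cont) auto
  finally show ?thesis .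
qed

lemma ennreal_integral_eq_nn_integral_Ioo:
  fixes \<phi> :: "real \<Rightarrow> real"
  assumes "\<phi> integrable_on {a..b}" and "\<And>x. x \<in> {a<..<b} \<Longrightarrow> 0 \<le> \<phi> x"
  shows "ennreal (integral {a..b} \<phi>) = (\<integral>\<^sup>+x\<in>{a<..<b}. ennreal (\<phi> x) \<partial>lborel)"
proof -
  have "(\<phi> has_integral integral {a..b} \<phi>) {a<..<b}"
    using assms(1) by (simp add: has_integral_Icc_iff_Ioo[symmetric] integrable_integral)
  from nn_integral_has_integral_lebesgue'[OF assms(2) this] show ?thesis by simp
qed

lemma tendsto_integral_at_right_nn_integral:
  fixes \<phi> :: "real \<Rightarrow> real"
  assumes "a < b" and cont: "continuous_on {a<..b} \<phi>" and nonneg: "\<And>x. x \<in> {a<..b} \<Longrightarrow> 0 \<le> \<phi> x"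
  shows "((\<lambda>x. ennreal (integral {x..b} \<phi>)) \<longlongrightarrow> (\<integral>\<^sup>+x\<in>{a<..<b}. ennreal (\<phi> x) \<partial>lborel))
    (at_right a)"
proof (rule tendsto_at_right_sequentially[OF \<open>a < b\<close>])
  fix S :: "nat \<Rightarrow> real"
  assume S: "\<And>n. a < S n" "\<And>n. S n < b" "decseq S" "S \<longlonglongrightarrow> a"
  define h where "h n x = ennreal (\<phi> x) * indicator {S n<..<b} x" for n x
  have sub: "{S n..b} \<subseteq> {a<..b}" for n using S(1)[of n] by auto
  have integral_eq: "ennreal (integral {S n..b} \<phi>) = integral\<^sup>N lborel (h n)" for n
    unfolding h_def using S(1)[of n] sub[of n]
    by (intro ennreal_integral_eq_nn_integral_Ioo integrable_continuous_interval
        continuous_on_subset[OF cont] nonneg) auto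
  have meas: "h n \<in> borel_measurable lborel" for n
  proof -
    have "(\<lambda>x. indicator {S n<..<b} x *\<^sub>R \<phi> x) \<in> borel_measurable borel"
      using S(1)[of n]
      by (intro borel_measurable_continuous_on_indicator continuous_on_subset[OF cont]) auto
    then have "(\<lambda>x. ennreal (indicator {S n<..<b} x *\<^sub>R \<phi> x)) \<in> borel_measurable borel"
      by measurable
    also have "(\<lambda>x. ennreal (indicator {S n<..<b} x *\<^sub>R \<phi> x)) = h n"
      by (auto simp: h_def indicator_def fun_eq_iff)
    finally show ?thesis by simp
  qed
  have inc: "incseq h"
    using decseqD[OF S(3)]
    by (auto simp: incseq_def le_fun_def h_def indicator_def intro: le_less_trans)
  have sup: "(SUP n. h n x) = ennreal (\<phi> x) * indicator {a<..<b} x" for x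
  proof (cases "x \<in> {a<..<b}")
    case True
    then obtain n where "S n < x"
      using order_tendstoD(2)[OF S(4), of x] by (auto dest: eventually_happens)
    then have hn: "h n x = ennreal (\<phi> x)" using True by (simp add: h_def)
    have "h m x \<le> ennreal (\<phi> x)" for m by (simp add: h_def indicator_def)
    then have "(SUP m. h m x) = ennreal (\<phi> x)"
      by (intro antisym SUP_least) (auto intro: SUP_upper2[where i=n] simp: hn)
    then show ?thesis using True by simp
  next
    case False
    then have "h n x = 0" for n using S(1)[of n] by (auto simp: h_def)
    then show ?thesis using False by simp
  qed
  have "(\<lambda>n. integral\<^sup>N lborel (h n)) \<longlonglongrightarrow> (SUP n. integral\<^sup>N lborel (h n))"
    using inc by (intro LIMSEQ_SUP) (auto simp: incseq_def le_fun_def intro: nn_integral_mono)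
  also have "(SUP n. integral\<^sup>N lborel (h n)) = (\<integral>\<^sup>+x\<in>{a<..<b}. ennreal (\<phi> x) \<partial>lborel)"
    using nn_integral_monotone_convergence_SUP[OF inc meas] by (simp add: sup)
  finally show "(\<lambda>n. ennreal (integral {S n..b} \<phi>)) \<longlonglongrightarrow> (\<integral>\<^sup>+x\<in>{a<..<b}. ennreal (\<phi> x) \<partial>lborel)"
    by (simp add: integral_eq)
qed

lemma ex1_eq_if_strict_mono_on:
  fixes f :: "real \<Rightarrow> real"
  assumes "strict_mono_on S f" and "{a..b} \<subseteq> S" and "a \<le> b" and "continuous_on {a..b} f"
    and "f a \<le> y" and "y \<le> f b"
  shows "\<exists>!x\<in>S. f x = y"
proof -
  obtain x where "a \<le> x" "x \<le> b" "f x = y" using IVT'[of f a y b] assms(3-6) by blast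
  moreover have "inj_on f S" using assms(1) by (rule strict_mono_on_imp_inj_on)
  ultimately show ?thesis using assms(2) by (metis atLeastAtMost_iff inj_onD subsetD)
qed

lemma ex1_root_iff_negative_value:
  fixes f :: "real \<Rightarrow> real"
  assumes mono: "strict_mono_on {0<..} f" and cont: "continuous_on {0<..} f"
    and top: "filterlim f at_top at_top"
  shows "(\<exists>!p. 0 < p \<and> f p = 0) \<longleftrightarrow> (\<exists>p>0. f p < 0)"
proof
  assume "\<exists>!p. 0 < p \<and> f p = 0"
  then obtain p where "0 < p" "f p = 0" by blast
  with strict_mono_onD[OF mono, of "p/2" p] have "f (p/2) < 0" by simp
  then show "\<exists>p>0. f p < 0" using \<open>0 < p\<close> by (intro exI[of _ "p/2"]) simp
next
  assume "\<exists>p>0. f p < 0"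
  then obtain a where a: "0 < a" "f a < 0" by blast
  obtain N where "\<And>x. N \<le> x \<Longrightarrow> 0 < f x"
    using top unfolding filterlim_at_top_dense eventually_at_top_linorder by blast
  then have b: "0 < f (max a N)" by simp
  have "\<exists>!x\<in>{0<..}. f x = 0"
    using a b
    by (intro ex1_eq_if_strict_mono_on[OF mono, of a "max a N"] continuous_on_subset[OF cont]) auto
  then show "\<exists>!p. 0 < p \<and> f p = 0" by auto
qed

lemma ex_greater_iff_ereal_less_limit:
  fixes g :: "real \<Rightarrow> real" and I :: ereal
  assumes le: "\<And>p. 0 < p \<Longrightarrow> ereal (g p) \<le> I" and lim: "((\<lambda>p. ereal (g p)) \<longlongrightarrow> I) (at_right 0)"
  shows "(\<exists>p>0. c < g p) \<longleftrightarrow> ereal c < I"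
proof
  assume "\<exists>p>0. c < g p"
  then obtain p where "0 < p" "c < g p" by blast
  then have "ereal c < ereal (g p)" by simp
  also have "\<dots> \<le> I" using \<open>0 < p\<close> by (rule le)
  finally show "ereal c < I" .
next
  assume "ereal c < I"
  have "\<forall>\<^sub>F p in at_right 0. 0 < p \<and> c < g p"
    using order_tendstoD(1)[OF lim \<open>ereal c < I\<close>] eventually_at_right_less[of 0]
    by eventually_elim simp
  then show "\<exists>p>0. c < g p" by (auto dest: eventually_happens)
qed

locale eos =
  fixes G G1 G2 H H1 H2 :: "real \<Rightarrow> real" and Ginf :: real
  assumes eos: "eos_assms G G1 G2 Ginf H H1 H2"
begin

lemma G_deriv: "0 < x \<Longrightarrow> (G has_real_derivative G1 x) (at x)"
  and G1_deriv: "0 < x \<Longrightarrow> (G1 has_real_derivative G2 x) (at x)"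
  and H_deriv: "0 < x \<Longrightarrow> (H has_real_derivative H1 x) (at x)"
  and H1_deriv: "0 < x \<Longrightarrow> (H1 has_real_derivative H2 x) (at x)"
  and G1_nonpos: "0 < x \<Longrightarrow> G1 x \<le> 0"
  and deriv_rho_G_nonneg: "0 < x \<Longrightarrow> 0 \<le> G x + x * G1 x"
  and H1_nonneg: "0 < x \<Longrightarrow> 0 \<le> H1 x"
  and G_tendsto: "(G \<longlongrightarrow> Ginf) at_top"
  and Ginf_pos: "0 < Ginf"
  using eos unfolding eos_assms_def by auto

lemma isCont_G: "0 < x \<Longrightarrow> isCont G x"
  and isCont_G1: "0 < x \<Longrightarrow> isCont G1 x"
  and isCont_H: "0 < x \<Longrightarrow> isCont H x"
  and isCont_H1: "0 < x \<Longrightarrow> isCont H1 x"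
  using G_deriv G1_deriv H_deriv H1_deriv by (blast intro: DERIV_isCont)+

lemma G_antimono: assumes "0 < x" "x \<le> y" shows "G y \<le> G x"
  using assms G_deriv G1_nonpos
  by (intro DERIV_nonpos_imp_nonincreasing[OF assms(2)]) (meson less_le_trans)

lemma G_ge_Ginf: assumes "0 < x" shows "Ginf \<le> G x"
  using assms by (intro tendsto_upperbound[OF G_tendsto] eventually_at_top_linorder[THEN iffD2])
    (auto intro: G_antimono)

lemma G_pos: "0 < x \<Longrightarrow> 0 < G x"
  using G_ge_Ginf Ginf_pos by force

lemma rho_G_mono: assumes "0 < x" "x \<le> y" shows "G x * x \<le> G y * y"
proof (rule DERIV_nonneg_imp_nondecreasing[OF assms(2)])
  fix z assume "x \<le> z" "z \<le> y"
  with assms have "0 < z" by simp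
  then have "((\<lambda>r. G r * r) has_real_derivative G1 z * z + G z) (at z)"
    by (auto intro!: derivative_eq_intros G_deriv)
  with deriv_rho_G_nonneg[OF \<open>0 < z\<close>]
  show "\<exists>d. ((\<lambda>r. G r * r) has_real_derivative d) (at z) \<and> 0 \<le> d"
    by (auto simp: algebra_simps)
qed

lemma H_le_pressure: assumes "0 < \<rho>" "0 \<le> eint G H p \<rho>" shows "H \<rho> \<le> p"
  using assms mult_pos_pos[OF G_pos[OF assms(1)] assms(1)]
  by (auto simp: eint_def zero_le_divide_iff)

lemma H_mono: assumes "0 < x" "x \<le> y" shows "H x \<le> H y"
  using assms H_deriv H1_nonneg
  by (intro DERIV_nonneg_imp_nondecreasing[OF assms(2)]) (meson less_le_trans)

end

locale wave_curve = eos +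
  fixes \<rho>k pk :: real and rhat :: "real \<Rightarrow> real"
  assumes side: "side_assms G G1 H H1 \<rho>k pk rhat"
begin

lemma \<rho>k_pos: "0 < \<rho>k"
  and pk_pos: "0 < pk"
  and eint_k: "0 \<le> eint G H pk \<rho>k"
  and rhat_deriv: "q \<in> {0<..pk} \<Longrightarrow>
    (rhat has_real_derivative 1 / (sound G G1 H H1 q (rhat q))\<^sup>2) (at q within {0<..pk})"
  and rhat_pos: "q \<in> {0<..pk} \<Longrightarrow> 0 < rhat q"
  and eint_rhat: "q \<in> {0<..pk} \<Longrightarrow> 0 \<le> eint G H q (rhat q)"
  using side unfolding side_assms_def by auto

abbreviation \<rho>max :: real where "\<rho>max \<equiv> rho_max G \<rho>k"
abbreviation \<rho>H :: "real \<Rightarrow> real" where "\<rho>H \<equiv> rho_H G H \<rho>k pk"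

definition psi :: "real \<Rightarrow> real" where "psi r = (r - \<rho>k) * G r"

lemma isCont_psi: "0 < r \<Longrightarrow> isCont psi r"
  unfolding psi_def[abs_def] by (intro continuous_intros isCont_G)

lemma psi_strict_mono: "strict_mono_on {\<rho>k..} psi"
proof (rule strict_mono_onI)
  fix a b assume "a \<in> {\<rho>k..}" "a < b"
  show "psi a < psi b"
  proof (rule DERIV_pos_imp_increasing[OF \<open>a < b\<close>])
    fix x assume "a \<le> x"
    with \<open>a \<in> {\<rho>k..}\<close> have x: "0 < x" "\<rho>k \<le> x" using \<rho>k_pos by auto
    have "0 < G x + x * G1 x - \<rho>k * G1 x"
    proof (cases "G1 x = 0")
      case False
      then have "\<rho>k * G1 x < 0" using G1_nonpos[OF x(1)] \<rho>k_pos by (simp add: mult_pos_neg)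
      then show ?thesis using deriv_rho_G_nonneg[OF x(1)] by linarith
    qed (simp add: G_pos x)
    moreover have "(psi has_real_derivative G x + (x - \<rho>k) * G1 x) (at x)"
      unfolding psi_def[abs_def] by (auto intro!: derivative_eq_intros G_deriv x)
    ultimately show "\<exists>d. (psi has_real_derivative d) (at x) \<and> 0 < d"
      by (auto simp: algebra_simps)
  qed
qed

lemma rho_max: "\<rho>k < \<rho>max" "psi \<rho>max = 2 * \<rho>k"
proof -
  define b where "b = \<rho>k + 2 * \<rho>k / Ginf"
  have b: "\<rho>k < b" using \<rho>k_pos Ginf_pos by (simp add: b_def)
  have "2 * \<rho>k = (2 * \<rho>k / Ginf) * Ginf" using Ginf_pos by simp
  also have "\<dots> \<le> (2 * \<rho>k / Ginf) * G b"
    using G_ge_Ginf[of b] b \<rho>k_pos Ginf_pos by (intro mult_left_mono) auto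
  also have "\<dots> = psi b" by (simp add: psi_def b_def)
  finally have "2 * \<rho>k \<le> psi b" .
  moreover have "continuous_on {\<rho>k..b} psi"
    using \<rho>k_pos by (intro continuous_at_imp_continuous_on ballI isCont_psi) auto
  ultimately have "\<exists>!r\<in>{\<rho>k..}. psi r = 2 * \<rho>k"
    using b \<rho>k_pos by (intro ex1_eq_if_strict_mono_on[OF psi_strict_mono]) (auto simp: psi_def)
  moreover have "psi \<rho>k \<noteq> 2 * \<rho>k" using \<rho>k_pos by (simp add: psi_def)
  ultimately have "\<exists>!r. \<rho>k < r \<and> (r - \<rho>k) * G r = 2 * \<rho>k"
    unfolding psi_def by (metis atLeast_iff order_le_less)
  from theI'[OF this] show "\<rho>k < \<rho>max" "psi \<rho>max = 2 * \<rho>k"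
    unfolding rho_max_def psi_def by auto
qed

definition hug_denom :: "real \<Rightarrow> real" where
  "hug_denom r = G \<rho>k * \<rho>k - G \<rho>k * psi r / 2"

definition hug_numer :: "real \<Rightarrow> real" where
  "hug_numer r = G \<rho>k * \<rho>k * H r + G r * r * (pk - H \<rho>k) + G \<rho>k * pk * psi r / 2"

definition hug_pressure :: "real \<Rightarrow> real" where
  "hug_pressure r = hug_numer r / hug_denom r"

lemma Phi_eq: "Phi G H \<rho>k pk p r = p * hug_denom r - hug_numer r"
  unfolding Phi_def hug_denom_def hug_numer_def psi_def by (simp add: field_simps)

lemma hug_denom_pos: assumes "\<rho>k \<le> r" "r < \<rho>max" shows "0 < hug_denom r"
proof -
  have "psi r < 2 * \<rho>k"
    using strict_mono_onD[OF psi_strict_mono, of r \<rho>max] assms rho_max by simp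
  then show ?thesis using G_pos[OF \<rho>k_pos] by (simp add: hug_denom_def algebra_simps)
qed

lemma hug_denom_\<rho>max: "hug_denom \<rho>max = 0"
  by (simp add: hug_denom_def rho_max)

lemma hug_denom_antimono: assumes "\<rho>k \<le> a" "a \<le> b" shows "hug_denom b \<le> hug_denom a"
  using strict_mono_on_leD[OF psi_strict_mono, of a b] assms G_pos[OF \<rho>k_pos]
  by (simp add: hug_denom_def)

lemma hug_numer_strict_mono: "strict_mono_on {\<rho>k..} hug_numer"
proof (rule strict_mono_onI)
  fix a b assume "a \<in> {\<rho>k..}" "b \<in> {\<rho>k..}" "a < b"
  then have a: "0 < a" "a \<le> b" using \<rho>k_pos by auto
  have "G \<rho>k * \<rho>k * H a \<le> G \<rho>k * \<rho>k * H b"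
    using H_mono[OF a] G_pos[OF \<rho>k_pos] \<rho>k_pos by simp
  moreover have "G a * a * (pk - H \<rho>k) \<le> G b * b * (pk - H \<rho>k)"
    using rho_G_mono[OF a] H_le_pressure[OF \<rho>k_pos eint_k] by (intro mult_right_mono) auto
  moreover have "psi a < psi b"
    using strict_mono_onD[OF psi_strict_mono] \<open>a \<in> {\<rho>k..}\<close> \<open>b \<in> {\<rho>k..}\<close> \<open>a < b\<close> .
  then have "G \<rho>k * pk * psi a / 2 < G \<rho>k * pk * psi b / 2"
    using G_pos[OF \<rho>k_pos] pk_pos by simp
  ultimately show "hug_numer a < hug_numer b" unfolding hug_numer_def by linarith
qed

lemma hug_numer_\<rho>k: "hug_numer \<rho>k = G \<rho>k * \<rho>k * pk"
  by (simp add: hug_numer_def psi_def algebra_simps)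

lemma hug_numer_pos: assumes "\<rho>k \<le> r" shows "0 < hug_numer r"
proof -
  have "0 < hug_numer \<rho>k" using G_pos \<rho>k_pos pk_pos by (simp add: hug_numer_\<rho>k)
  also have "\<dots> \<le> hug_numer r" using strict_mono_on_leD[OF hug_numer_strict_mono] assms by simp
  finally show ?thesis .
qed

lemma hug_pressure_\<rho>k: "hug_pressure \<rho>k = pk"
  using G_pos[OF \<rho>k_pos] \<rho>k_pos
  by (simp add: hug_pressure_def hug_numer_\<rho>k hug_denom_def psi_def)

lemma hug_pressure_strict_mono: "strict_mono_on {\<rho>k..<\<rho>max} hug_pressure"
proof (rule strict_mono_onI)
  fix a b assume "a \<in> {\<rho>k..<\<rho>max}" "b \<in> {\<rho>k..<\<rho>max}" "a < b"
  then show "hug_pressure a < hug_pressure b"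
    unfolding hug_pressure_def
    using strict_mono_onD[OF hug_numer_strict_mono, of a b] hug_numer_pos[of a]
      hug_denom_pos[of b] hug_denom_antimono[of a b]
    by (intro frac_less) auto
qed

lemma isCont_hug_numer: "0 < r \<Longrightarrow> isCont hug_numer r"
  and isCont_hug_denom: "0 < r \<Longrightarrow> isCont hug_denom r"
  unfolding hug_numer_def[abs_def] hug_denom_def[abs_def]
  by (intro continuous_intros isCont_G isCont_H isCont_psi; simp)+

lemma isCont_hug_pressure: assumes "\<rho>k \<le> r" "r < \<rho>max" shows "isCont hug_pressure r"
  unfolding hug_pressure_def[abs_def] using assms \<rho>k_pos hug_denom_pos[OF assms]
  by (intro continuous_intros isCont_hug_numer isCont_hug_denom) auto

lemma hug_pressure_tendsto_at_top: "filterlim hug_pressure at_top (at_left \<rho>max)"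
  unfolding hug_pressure_def[abs_def]
proof (rule LIM_at_top_divide)
  have "0 < \<rho>max" using rho_max \<rho>k_pos by simp
  show "(hug_numer \<longlongrightarrow> hug_numer \<rho>max) (at_left \<rho>max)"
    using isCont_hug_numer[OF \<open>0 < \<rho>max\<close>] by (simp add: isCont_def filterlim_at_split)
  show "0 < hug_numer \<rho>max" using rho_max by (intro hug_numer_pos) simp
  show "(hug_denom \<longlongrightarrow> 0) (at_left \<rho>max)"
    using isCont_hug_denom[OF \<open>0 < \<rho>max\<close>]
    by (simp add: isCont_def filterlim_at_split hug_denom_\<rho>max)
  show "\<forall>\<^sub>F r in at_left \<rho>max. 0 < hug_denom r"
    using eventually_at_left_real[OF rho_max(1)] by eventually_elim (simp add: hug_denom_pos)
qed

lemma Phi_eq_0_iff: assumes "\<rho>k \<le> r" "r < \<rho>max"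
  shows "Phi G H \<rho>k pk p r = 0 \<longleftrightarrow> hug_pressure r = p"
  using hug_denom_pos[OF assms] by (auto simp: Phi_eq hug_pressure_def field_simps)

lemma rho_H: assumes "pk < p" shows "\<rho>k < \<rho>H p" "\<rho>H p < \<rho>max" "hug_pressure (\<rho>H p) = p"
proof -
  have "\<forall>\<^sub>F r in at_left \<rho>max. r \<in> {\<rho>k<..<\<rho>max} \<and> p \<le> hug_pressure r"
    using eventually_at_left_real[OF rho_max(1)]
      filterlim_at_top[THEN iffD1, OF hug_pressure_tendsto_at_top, rule_format, of p]
    by eventually_elim simp
  then obtain r1 where r1: "\<rho>k < r1" "r1 < \<rho>max" "p \<le> hug_pressure r1"
    by (auto dest: eventually_happens simp: trivial_limit_at_left_real)
  have "continuous_on {\<rho>k..r1} hug_pressure"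
    using r1 by (intro continuous_at_imp_continuous_on ballI isCont_hug_pressure) auto
  then have "\<exists>!r\<in>{\<rho>k..<\<rho>max}. hug_pressure r = p"
    using r1 assms
    by (intro ex1_eq_if_strict_mono_on[OF hug_pressure_strict_mono]) (auto simp: hug_pressure_\<rho>k)
  moreover have "hug_pressure \<rho>k \<noteq> p" using assms by (simp add: hug_pressure_\<rho>k)
  ultimately have "\<exists>!r. \<rho>k < r \<and> r < \<rho>max \<and> Phi G H \<rho>k pk p r = 0"
    using Phi_eq_0_iff by (metis atLeastLessThan_iff order_le_less)
  from theI'[OF this] show "\<rho>k < \<rho>H p" "\<rho>H p < \<rho>max" "hug_pressure (\<rho>H p) = p"
    unfolding rho_H_def using Phi_eq_0_iff by auto
qed

lemma rho_H_hug_pressure: assumes "\<rho>k < r" "r < \<rho>max" shows "\<rho>H (hug_pressure r) = r"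
proof -
  have "pk < hug_pressure r"
    using strict_mono_onD[OF hug_pressure_strict_mono, of \<rho>k r] assms by (simp add: hug_pressure_\<rho>k)
  from rho_H[OF this] assms show ?thesis
    by (intro strict_mono_on_eqD[OF hug_pressure_strict_mono, of r]) auto
qed

lemma rho_H_strict_mono: "strict_mono_on {pk<..} \<rho>H"
proof (rule strict_mono_onI)
  fix p q assume "p \<in> {pk<..}" "q \<in> {pk<..}" "p < q"
  with rho_H[of p] rho_H[of q] show "\<rho>H p < \<rho>H q"
    using strict_mono_on_less[OF hug_pressure_strict_mono, of "\<rho>H p" "\<rho>H q"] by auto
qed

lemma isCont_rho_H: assumes "pk < p" shows "isCont \<rho>H p"
proof -
  let ?r = "\<rho>H p"
  note r = rho_H[OF assms]
  have "isCont \<rho>H (hug_pressure ?r)"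
  proof (rule isCont_inverse_function2[of "(\<rho>k + ?r) / 2" ?r "(?r + \<rho>max) / 2"])
    fix z assume "(\<rho>k + ?r) / 2 \<le> z" "z \<le> (?r + \<rho>max) / 2"
    with r have z: "\<rho>k < z" "z < \<rho>max" by auto
    show "\<rho>H (hug_pressure z) = z" using rho_H_hug_pressure[OF z] .
    show "isCont hug_pressure z" using isCont_hug_pressure z by simp
  qed (use r in auto)
  with r show ?thesis by simp
qed

definition phi :: "real \<Rightarrow> real" where
  "phi q = 1 / (rhat q * sound G G1 H H1 q (rhat q))"

definition J :: "real \<Rightarrow> real" where
  "J p = integral {p..pk} phi"

lemma sound_pos: assumes "q \<in> {0<..pk}" shows "0 < sound G G1 H H1 q (rhat q)"
proof -
  let ?r = "rhat q"
  have r: "0 < ?r" "0 < G ?r" using rhat_pos[OF assms] G_pos by auto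
  have "0 \<le> (G ?r + ?r * G1 ?r) / (?r * G ?r)" using deriv_rho_G_nonneg[OF r(1)] r by simp
  also have "\<dots> = 1 / ?r + G1 ?r / G ?r" using r by (simp add: field_simps)
  finally have "0 \<le> (1 / ?r + G1 ?r / G ?r) * (q - H ?r)"
    using H_le_pressure[OF r(1) eint_rhat[OF assms]] by simp
  moreover have "0 < q / ?r * G ?r" using assms r by simp
  ultimately show ?thesis
    unfolding sound_def using H1_nonneg[OF r(1)] by (intro real_sqrt_gt_zero) linarith
qed

lemma phi_pos: "q \<in> {0<..pk} \<Longrightarrow> 0 < phi q"
  unfolding phi_def using sound_pos rhat_pos by simp

lemma continuous_on_phi: "continuous_on {0<..pk} phi"
proof -
  have rhat: "continuous_on {0<..pk} rhat"
    using rhat_deriv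
    by (blast intro: DERIV_continuous continuous_on_eq_continuous_within[THEN iffD2])
  have comp: "continuous_on {0<..pk} (\<lambda>q. K (rhat q))"
    if "\<And>x. 0 < x \<Longrightarrow> isCont K x" for K :: "real \<Rightarrow> real"
    using that rhat_pos
    by (intro continuous_on_compose2[OF continuous_at_imp_continuous_on[of "{0<..}"] rhat]) auto
  have ne: "rhat q \<noteq> 0" "G (rhat q) \<noteq> 0" if "q \<in> {0<..pk}" for q
    using rhat_pos[OF that] G_pos[OF rhat_pos[OF that]] by auto
  have "continuous_on {0<..pk} (\<lambda>q. sound G G1 H H1 q (rhat q))"
    unfolding sound_def using ne
    by (intro continuous_intros rhat comp isCont_G isCont_G1 isCont_H isCont_H1) auto
  then show ?thesis
    unfolding phi_def[abs_def] using rhat_pos sound_pos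
    by (intro continuous_intros rhat) (auto simp: less_imp_neq[symmetric])
qed

lemma phi_integrable: "0 < a \<Longrightarrow> b \<le> pk \<Longrightarrow> phi integrable_on {a..b}"
  by (intro integrable_continuous_interval continuous_on_subset[OF continuous_on_phi]) auto

lemma J_strict_antimono: assumes "0 < a" "a < b" "b \<le> pk" shows "J b < J a"
proof -
  have "integral {a..b} phi + integral {b..pk} phi = integral {a..pk} phi"
    using assms phi_integrable by (intro Henstock_Kurzweil_Integration.integral_combine) auto
  moreover have "0 < integral {a..b} phi"
    using assms phi_pos
    by (intro integral_pos_if_continuous_pos continuous_on_subset[OF continuous_on_phi]) auto
  ultimately show ?thesis unfolding J_def by linarith
qed

lemma J_nonneg: assumes "0 < p" "p \<le> pk" shows "0 \<le> J p"
  using J_strict_antimono[of p pk] assms by (cases "p = pk") (auto simp: J_def)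

lemma continuous_on_J: "0 < a \<Longrightarrow> continuous_on {a..pk} J"
  unfolding J_def[abs_def] by (intro indefinite_integral_continuous_1' phi_integrable) auto

abbreviation F :: "real \<Rightarrow> real" where "F \<equiv> fk G G1 H H1 \<rho>k pk rhat"

lemma F_rarefaction: "p \<le> pk \<Longrightarrow> F p = - J p"
  by (simp add: fk_def J_def phi_def[abs_def])

lemma F_shock: "pk < p \<Longrightarrow> F p = sqrt ((p - pk) * (1 / \<rho>k - 1 / \<rho>H p))"
  by (simp add: fk_def)

lemma F_shock_pos: assumes "pk < p" shows "0 < F p"
  using rho_H(1)[OF assms] \<rho>k_pos assms by (simp add: F_shock frac_less2)

lemma F_strict_mono: "strict_mono_on {0<..} F"
proof (rule strict_mono_onI)
  fix a b :: real assume "a \<in> {0<..}" "b \<in> {0<..}" "a < b"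
  then have a: "0 < a" "a < b" by auto
  consider "b \<le> pk" | "a \<le> pk" "pk < b" | "pk < a" by linarith
  then show "F a < F b"
  proof cases
    case 1
    then show ?thesis using J_strict_antimono[OF a 1] a by (simp add: F_rarefaction)
  next
    case 2
    then show ?thesis using J_nonneg[OF a(1) 2(1)] F_shock_pos[OF 2(2)] by (simp add: F_rarefaction)
  next
    case 3
    have "\<rho>k < \<rho>H a" "\<rho>H a < \<rho>H b"
      using rho_H(1)[OF 3] strict_mono_onD[OF rho_H_strict_mono, of a b] 3 a by auto
    then have "1 / \<rho>H b < 1 / \<rho>H a" "1 / \<rho>H a < 1 / \<rho>k" using \<rho>k_pos by (auto simp: frac_less2)
    then have "(a - pk) * (1 / \<rho>k - 1 / \<rho>H a) < (b - pk) * (1 / \<rho>k - 1 / \<rho>H b)"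
      using 3 a by (intro mult_strict_mono) auto
    then show ?thesis using 3 a by (simp add: F_shock)
  qed
qed

lemma F_shock_le: assumes "pk \<le> p" shows "\<bar>F p\<bar> \<le> sqrt ((p - pk) / \<rho>k)"
proof (cases "p = pk")
  case False
  with assms have "pk < p" by simp
  with rho_H(1)[OF this] \<rho>k_pos have "(p - pk) * (1 / \<rho>k - 1 / \<rho>H p) \<le> (p - pk) / \<rho>k"
    by (simp add: algebra_simps)
  with F_shock_pos[OF \<open>pk < p\<close>] show ?thesis by (simp add: F_shock \<open>pk < p\<close>)
qed (simp add: F_rarefaction J_def)

lemma continuous_on_F_shock: "continuous_on {pk..} F"
proof (rule continuous_on_eq_continuous_within[THEN iffD2], rule ballI)
  fix x assume "x \<in> {pk..}"
  show "continuous (at x within {pk..}) F"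
  proof (cases "x = pk")
    case True
    have "((\<lambda>p. sqrt ((p - pk) / \<rho>k)) \<longlongrightarrow> sqrt ((pk - pk) / \<rho>k)) (at pk within {pk..})"
      using \<rho>k_pos by (intro tendsto_intros) auto
    then have lim: "((\<lambda>p. sqrt ((p - pk) / \<rho>k)) \<longlongrightarrow> 0) (at pk within {pk..})" by simp
    have "\<forall>\<^sub>F p in at pk within {pk..}. norm (F p) \<le> sqrt ((p - pk) / \<rho>k)"
      unfolding eventually_at_filter real_norm_def
      by (intro always_eventually allI impI F_shock_le) simp
    then have "(F \<longlongrightarrow> 0) (at pk within {pk..})" using lim by (rule Lim_null_comparison)
    then show ?thesis using True by (simp add: continuous_within F_rarefaction J_def)
  next
    case False
    with \<open>x \<in> {pk..}\<close> have "pk < x" by simp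
    have "isCont (\<lambda>p. sqrt ((p - pk) * (1 / \<rho>k - 1 / \<rho>H p))) x"
      using isCont_rho_H[OF \<open>pk < x\<close>] rho_H(1)[OF \<open>pk < x\<close>] \<rho>k_pos by (intro continuous_intros) auto
    moreover have "\<forall>\<^sub>F p in nhds x. F p = sqrt ((p - pk) * (1 / \<rho>k - 1 / \<rho>H p))"
      by (rule eventually_mono[OF eventually_nhds_in_open[of "{pk<..}" x]])
        (use \<open>pk < x\<close> in \<open>simp_all add: F_shock\<close>)
    ultimately show ?thesis by (simp add: isCont_cong continuous_at_imp_continuous_within)
  qed
qed

lemma continuous_on_F: "continuous_on {0<..} F"
proof (rule continuous_at_imp_continuous_on, rule ballI)
  fix x :: real assume "x \<in> {0<..}"
  have "continuous_on {x/2..pk} (\<lambda>p. - J p)"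
    using \<open>x \<in> {0<..}\<close> by (intro continuous_on_minus continuous_on_J) simp
  then have "continuous_on {x/2..pk} F" by (rule continuous_on_eq) (simp add: F_rarefaction)
  then have "continuous_on ({x/2..pk} \<union> {pk..}) F"
    by (intro continuous_on_closed_Un continuous_on_F_shock) auto
  moreover have "{x/2..pk} \<union> {pk..} = {min (x/2) pk..}" by auto
  ultimately show "isCont F x"
    using \<open>x \<in> {0<..}\<close> by (intro continuous_on_interior[of "{min (x/2) pk..}"]) auto
qed

lemma F_tendsto_at_top: "filterlim F at_top at_top"
proof -
  define d where "d = 1 / \<rho>k - 1 / \<rho>H (pk + 1)"
  have "0 < d" using rho_H(1)[of "pk + 1"] \<rho>k_pos by (simp add: d_def frac_less2)
  have "filterlim (\<lambda>p. sqrt ((p - pk) * d)) at_top at_top"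
    using \<open>0 < d\<close> by real_asymp
  moreover have "\<forall>\<^sub>F p in at_top. sqrt ((p - pk) * d) \<le> F p"
    using eventually_ge_at_top[of "pk + 1"]
  proof eventually_elim
    case (elim p)
    then have "\<rho>H (pk + 1) \<le> \<rho>H p" "0 < \<rho>H (pk + 1)"
      using strict_mono_on_leD[OF rho_H_strict_mono, of "pk + 1" p] rho_H(1)[of "pk + 1"] \<rho>k_pos
      by auto
    then have "d \<le> 1 / \<rho>k - 1 / \<rho>H p" by (simp add: d_def frac_le)
    then have "(p - pk) * d \<le> (p - pk) * (1 / \<rho>k - 1 / \<rho>H p)"
      using elim by (intro mult_left_mono) simp_all
    then show ?case using elim by (simp add: F_shock)
  qed
  ultimately show ?thesis by (rule filterlim_at_top_mono)
qed

lemma Ik_nonneg: "0 \<le> Ik G G1 H H1 pk rhat"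
  by (simp add: Ik_def)

lemma minus_F_tendsto_Ik: "((\<lambda>p. ereal (- F p)) \<longlongrightarrow> Ik G G1 H H1 pk rhat) (at_right 0)"
proof -
  have "((\<lambda>p. ennreal (J p)) \<longlongrightarrow> (\<integral>\<^sup>+q\<in>{0<..<pk}. ennreal (phi q) \<partial>lborel)) (at_right 0)"
    unfolding J_def using pk_pos continuous_on_phi phi_pos
    by (intro tendsto_integral_at_right_nn_integral) (auto intro: less_imp_le)
  then have "((\<lambda>p. enn2ereal (ennreal (J p))) \<longlongrightarrow> Ik G G1 H H1 pk rhat) (at_right 0)"
    unfolding Ik_def phi_def by (rule tendsto_enn2erealI)
  moreover have "\<forall>\<^sub>F p in at_right 0. enn2ereal (ennreal (J p)) = ereal (- F p)"
    using eventually_at_right_real[OF pk_pos] by eventually_elim (simp add: J_nonneg F_rarefaction)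
  ultimately show ?thesis by (rule Lim_transform_eventually)
qed

lemma minus_F_le_Ik: assumes "0 < p" shows "ereal (- F p) \<le> Ik G G1 H H1 pk rhat"
proof (rule tendsto_lowerbound[OF minus_F_tendsto_Ik])
  show "\<forall>\<^sub>F q in at_right 0. ereal (- F p) \<le> ereal (- F q)"
    using eventually_at_right_real[OF assms]
    by eventually_elim (use strict_mono_on_leD[OF F_strict_mono] assms in auto)
qed simp

end

theorem theorem1:
  fixes Gl Gl1 Gl2 Hl Hl1 Hl2 Gr Gr1 Gr2 Hr Hr1 Hr2 rhatl rhatr :: "real \<Rightarrow> real"
    and Glinf Grinf \<rho>l \<rho>r pl pr ul ur :: real
  assumes "eos_assms Gl Gl1 Gl2 Glinf Hl Hl1 Hl2"
    and "eos_assms Gr Gr1 Gr2 Grinf Hr Hr1 Hr2"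
    and "side_assms Gl Gl1 Hl Hl1 \<rho>l pl rhatl"
    and "side_assms Gr Gr1 Hr Hr1 \<rho>r pr rhatr"
  shows "(\<exists>!p. 0 < p \<and> fk Gl Gl1 Hl Hl1 \<rho>l pl rhatl p + fk Gr Gr1 Hr Hr1 \<rho>r pr rhatr p + ur - ul = 0)
     \<longleftrightarrow> ereal (ur - ul) < Ik Gl Gl1 Hl Hl1 pl rhatl + Ik Gr Gr1 Hr Hr1 pr rhatr"
proof -
  interpret L: wave_curve Gl Gl1 Gl2 Hl Hl1 Hl2 Glinf \<rho>l pl rhatl
    by unfold_locales (fact assms)+
  interpret R: wave_curve Gr Gr1 Gr2 Hr Hr1 Hr2 Grinf \<rho>r pr rhatr
    by unfold_locales (fact assms)+
  define f where "f p = L.F p + R.F p + (ur - ul)" for p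
  define I where "I = Ik Gl Gl1 Hl Hl1 pl rhatl + Ik Gr Gr1 Hr Hr1 pr rhatr"
  have mono: "strict_mono_on {0<..} f"
    using strict_mono_onD[OF L.F_strict_mono] strict_mono_onD[OF R.F_strict_mono]
    by (intro strict_mono_onI) (simp add: f_def add_strict_mono)
  have cont: "continuous_on {0<..} f"
    unfolding f_def using L.continuous_on_F R.continuous_on_F by (intro continuous_intros)
  have "filterlim (\<lambda>p. (ur - ul) + (L.F p + R.F p)) at_top at_top"
    by (intro filterlim_tendsto_add_at_top[OF tendsto_const] filterlim_at_top_add_at_top
        L.F_tendsto_at_top R.F_tendsto_at_top)
  then have top: "filterlim f at_top at_top" unfolding f_def by (simp add: ac_simps)
  have "(\<exists>!p. 0 < p \<and> f p = 0) \<longleftrightarrow> (\<exists>p>0. f p < 0)"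
    by (rule ex1_root_iff_negative_value[OF mono cont top])
  also have "\<dots> \<longleftrightarrow> (\<exists>p>0. ur - ul < - L.F p + - R.F p)" by (auto simp: f_def)
  also have "\<dots> \<longleftrightarrow> ereal (ur - ul) < I"
  proof (rule ex_greater_iff_ereal_less_limit)
    show "ereal (- L.F p + - R.F p) \<le> I" if "0 < p" for p
      using add_mono[OF L.minus_F_le_Ik[OF that] R.minus_F_le_Ik[OF that]] by (simp add: I_def)
    show "((\<lambda>p. ereal (- L.F p + - R.F p)) \<longlongrightarrow> I) (at_right 0)"
      using tendsto_add_ereal_nonneg[OF _ _ L.minus_F_tendsto_Ik R.minus_F_tendsto_Ik]
        L.Ik_nonneg R.Ik_nonneg by (simp add: I_def)
  qed
  finally show ?thesis by (simp add: f_def I_def algebra_simps)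
qed

end
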